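(* For each $q\ge 1$ there exists a constant $C_q>0$ such that for every $n>0$ there exists a Boolean function $f:\{0,1\}^n\to\{0,1\}$ whose stringent $q$-ary quantum circuit complexity is at least $C_q\cdot 2^n/n$.
   Context: $V$ is a 2-dimensional complex Hermitian space with orthonormal basis $|0\rangle,|1\rangle$. For $f:\{0,1\}^n\to\{0,1\}$, $U_f\in\mathbf{U}(V^{\otimes(n+1)})$ is defined by $U_f(|\mathbf{x}\rangle\otimes|y\rangle) = |\mathbf{x}\rangle\otimes|f(x)\oplus y\rangle$. A $q$-ary quantum gate is an element $U_g\in\mathbf{U}(V^{\otimes q})$; applied to an ordered choice $\mathbf{i}=(i_1<\cdots<i_q)$ of $q$ of the $m$ tensor factors it gives $U_{g,\mathbf{i}}\in\mathbf{U}(V^{\otimes m})$, namely $U_g$ acting on factors $i_1,\ldots,i_q$ tensored with the identity on the others. The $q$-ary quantum circuit complexity of $U\in\mathbf{U}(V^{\otimes m})$ is the minimum $r$ such that $U = U_{g_1,\mathbf{i}_1}\cdots U_{g_r,\mathbf{i}_r}$ for some $q$-ary gates and index choices. The stringent $q$-ary quantum circuit complexity of $f$ is the $q$-ary quantum circuit complexity of $U_f$ (with $m=n+1$). *)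

theory Defs
  imports Complex_Main "HOL-Library.Extended_Real"
begin

text \<open>Operators on V^{tensor m}: V has orthonormal basis |0>,|1> (False, True);
  the computational basis of V^{tensor m} is indexed by bit lists of length m
  (list position k = tensor factor k+1). An operator is given by its matrix
  M row col = <row| M |col>; only entries at lists of length m matter.\<close>

type_synonym qop = "bool list \<Rightarrow> bool list \<Rightarrow> complex"

definition bits :: "nat \<Rightarrow> bool list set" where
  "bits m = {xs. length xs = m}"

definition opeq :: "nat \<Rightarrow> qop \<Rightarrow> qop \<Rightarrow> bool" where
  "opeq m A B \<longleftrightarrow> (\<forall>x\<in>bits m. \<forall>y\<in>bits m. A x y = B x y)"

definition mmul :: "nat \<Rightarrow> qop \<Rightarrow> qop \<Rightarrow> qop" where
  "mmul m A B = (\<lambda>x y. \<Sum>z\<in>bits m. A x z * B z y)"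

definition idop :: qop where
  "idop = (\<lambda>x y. if x = y then 1 else 0)"

definition adjoint :: "qop \<Rightarrow> qop" where
  "adjoint A = (\<lambda>x y. cnj (A y x))"

definition unitary_op :: "nat \<Rightarrow> qop \<Rightarrow> bool" where
  "unitary_op m A \<longleftrightarrow> opeq m (mmul m A (adjoint A)) idop \<and> opeq m (mmul m (adjoint A) A) idop"

definition index_choice :: "nat \<Rightarrow> nat \<Rightarrow> nat list \<Rightarrow> bool" where
  "index_choice q m is \<longleftrightarrow> length is = q \<and> sorted_wrt (<) is \<and> (\<forall>i\<in>set is. i < m)"

text \<open>U_{g,i}: the gate g acting on factors i_1,...,i_q (gate factor j on factor i_j),
  tensored with the identity on the other factors.\<close>
definition apply_gate :: "nat \<Rightarrow> qop \<Rightarrow> nat list \<Rightarrow> qop" where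
  "apply_gate m g is = (\<lambda>x y.
     if (\<forall>k<m. k \<notin> set is \<longrightarrow> x ! k = y ! k)
     then g (map (\<lambda>i. x ! i) is) (map (\<lambda>i. y ! i) is) else 0)"

fun circuit_op :: "nat \<Rightarrow> (qop \<times> nat list) list \<Rightarrow> qop" where
  "circuit_op m [] = idop"
| "circuit_op m ((g, is) # gs) = mmul m (apply_gate m g is) (circuit_op m gs)"

definition q_circuit :: "nat \<Rightarrow> nat \<Rightarrow> (qop \<times> nat list) list \<Rightarrow> bool" where
  "q_circuit q m gs \<longleftrightarrow> (\<forall>(g, is)\<in>set gs. unitary_op q g \<and> index_choice q m is)"

text \<open>q-ary quantum circuit complexity of U in U(V^{tensor m}); infinity if U is not
  expressible as such a product.\<close>
definition qcc :: "nat \<Rightarrow> nat \<Rightarrow> qop \<Rightarrow> enat" where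
  "qcc q m U = (INF gs \<in> {gs. q_circuit q m gs \<and> opeq m (circuit_op m gs) U}. enat (length gs))"

text \<open>U_f(|x> tensor |y>) = |x> tensor |f(x) xor y>, on V^{tensor (n+1)}.\<close>
definition U_f :: "nat \<Rightarrow> (bool list \<Rightarrow> bool) \<Rightarrow> qop" where
  "U_f n f = (\<lambda>r c. if take n r = take n c \<and> r ! n = (f (take n c) \<noteq> c ! n) then 1 else 0)"

definition stringent_qcc :: "nat \<Rightarrow> nat \<Rightarrow> (bool list \<Rightarrow> bool) \<Rightarrow> enat" where
  "stringent_qcc q n f = qcc q (n + 1) (U_f n f)"

end

theory Submission
  imports Defs "HOL-Analysis.L2_Norm" "HOL-Library.FuncSet"
begin

text \<open>A counting argument. Every entry of a unitary gate lies in the unit disc, so rounding the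
  entries to the grid (\<int> + i\<int>)/D with D = 2^(2n+q+2) leaves at most 2^(nE) codes per gate, for
  a constant E depending only on q. Circuits with the same code differ gatewise by at most 2/D in
  every entry; since unitaries preserve the Frobenius norm, a circuit of fewer than 2^n gates is
  then moved by less than 1 in Frobenius norm, whereas U_f and U_g are at distance at least 1
  whenever f \<noteq> g. So if all 2^(2^n) Boolean functions had circuits of at most L < 2^n gates, the
  codes of these circuits would be pairwise distinct, giving 2^(2^n) \<le> 2^(nEL), i.e. L \<ge> 2^n/(nE).\<close>

subsection \<open>Matrices indexed by bit strings\<close>

lemma finite_bits [simp]: "finite (bits m)"
  using finite_lists_length_eq[of "UNIV :: bool set" m] by (simp add: bits_def)

lemma card_bits: "card (bits m) = 2 ^ m"
  using card_lists_length_eq[of "UNIV :: bool set" m] by (simp add: bits_def)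

lemma opeq_refl: "opeq m A A"
  by (simp add: opeq_def)

lemma opeq_trans: "opeq m A B \<Longrightarrow> opeq m B C \<Longrightarrow> opeq m A C"
  by (simp add: opeq_def)

lemma mmul_assoc: "mmul m (mmul m A B) C = mmul m A (mmul m B C)"
proof (intro ext)
  fix x y
  have "mmul m (mmul m A B) C x y = (\<Sum>z\<in>bits m. \<Sum>w\<in>bits m. A x w * B w z * C z y)"
    by (simp add: mmul_def sum_distrib_right)
  also have "\<dots> = (\<Sum>w\<in>bits m. \<Sum>z\<in>bits m. A x w * B w z * C z y)"
    by (rule sum.swap)
  also have "\<dots> = mmul m A (mmul m B C) x y"
    by (simp add: mmul_def sum_distrib_left mult.assoc)
  finally show "mmul m (mmul m A B) C x y = mmul m A (mmul m B C) x y" .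
qed

lemma mmul_opeq_cong: "opeq m A A' \<Longrightarrow> opeq m B B' \<Longrightarrow> opeq m (mmul m A B) (mmul m A' B')"
  by (auto simp: opeq_def mmul_def intro!: sum.cong)

lemma mmul_idop_left: "x \<in> bits m \<Longrightarrow> mmul m idop A x y = A x y"
proof -
  assume "x \<in> bits m"
  moreover have "mmul m idop A x y = (\<Sum>z\<in>bits m. if x = z then A z y else 0)"
    unfolding mmul_def idop_def by (rule sum.cong) auto
  ultimately show ?thesis by simp
qed

lemma adjoint_mmul: "adjoint (mmul m A B) = mmul m (adjoint B) (adjoint A)"
  by (auto simp: adjoint_def mmul_def mult.commute intro!: ext)

lemma adjoint_adjoint [simp]: "adjoint (adjoint A) = A"
  by (simp add: adjoint_def)

lemma adjoint_idop [simp]: "adjoint idop = idop"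
  by (auto simp: adjoint_def idop_def intro!: ext)

lemma mmul_cancel_middle:
  assumes "opeq m (mmul m A B) idop"
  shows "opeq m (mmul m X (mmul m A (mmul m B Y))) (mmul m X Y)"
proof -
  have "opeq m (mmul m (mmul m A B) Y) Y"
    using mmul_opeq_cong[OF assms opeq_refl, of Y] by (simp add: opeq_def mmul_idop_left)
  then show ?thesis
    using mmul_opeq_cong[OF opeq_refl] by (simp add: mmul_assoc)
qed

lemma unitary_adjoint: "unitary_op m A \<Longrightarrow> unitary_op m (adjoint A)"
  by (simp add: unitary_op_def)

lemma unitary_idop: "unitary_op m idop"
  by (simp add: unitary_op_def opeq_def mmul_idop_left)

lemma unitary_mmul:
  assumes "unitary_op m A" "unitary_op m B"
  shows "unitary_op m (mmul m A B)"
  using assms mmul_cancel_middle[of m B "adjoint B" A "adjoint A"]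
    mmul_cancel_middle[of m "adjoint A" A "adjoint B" B]
  by (auto simp: unitary_op_def adjoint_mmul mmul_assoc intro: opeq_trans)

subsection \<open>Gates acting on chosen tensor factors\<close>

definition agree_off :: "nat \<Rightarrow> nat list \<Rightarrow> bool list \<Rightarrow> bool list \<Rightarrow> bool" where
  "agree_off m ix x y \<longleftrightarrow> (\<forall>k<m. k \<notin> set ix \<longrightarrow> x ! k = y ! k)"

definition bits_at :: "nat list \<Rightarrow> bool list \<Rightarrow> bool list" where
  "bits_at ix x = map (\<lambda>i. x ! i) ix"

definition set_bits_at :: "bool list \<Rightarrow> nat list \<Rightarrow> bool list \<Rightarrow> bool list" where
  "set_bits_at x ix w = fold (\<lambda>(i, b) z. z[i := b]) (zip ix w) x"

lemma apply_gate_eq: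
  "apply_gate m g ix x y = (if agree_off m ix x y then g (bits_at ix x) (bits_at ix y) else 0)"
  unfolding apply_gate_def agree_off_def bits_at_def by (rule refl)

lemma adjoint_apply_gate: "adjoint (apply_gate m g ix) = apply_gate m (adjoint g) ix"
  by (auto simp: adjoint_def apply_gate_eq agree_off_def intro!: ext)

lemma apply_gate_diff:
  "(\<lambda>x y. apply_gate m g ix x y - apply_gate m h ix x y) = apply_gate m (\<lambda>a b. g a b - h a b) ix"
  by (simp add: apply_gate_eq fun_eq_iff)

lemma length_set_bits_at [simp]: "length (set_bits_at x ix w) = length x"
  by (induction ix arbitrary: w x) (auto simp: set_bits_at_def zip_Cons1 split: list.split)

lemma set_bits_at_nth_notin: "k \<notin> set ix \<Longrightarrow> set_bits_at x ix w ! k = x ! k"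
  by (induction ix arbitrary: w x) (auto simp: set_bits_at_def zip_Cons1 split: list.split)

lemma set_bits_at_nth_in:
  assumes "distinct ix" "length w = length ix" "\<forall>i\<in>set ix. i < length x" "j < length ix"
  shows "set_bits_at x ix w ! (ix ! j) = w ! j"
  using assms
proof (induction ix arbitrary: w x j)
  case Nil
  then show ?case by simp
next
  case (Cons i ix)
  then obtain b w' where w: "w = b # w'"
    by (cases w) auto
  have step: "set_bits_at x (i # ix) (b # w') = set_bits_at (x[i := b]) ix w'"
    by (simp add: set_bits_at_def)
  show ?case
  proof (cases j)
    case 0
    then show ?thesis
      using Cons.prems by (simp add: step w set_bits_at_nth_notin)
  next
    case (Suc j')
    then show ?thesis
      using Cons.prems Cons.IH[of w' "x[i := b]" j'] by (simp add: step w)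
  qed
qed

context
  fixes q m :: nat and ix :: "nat list"
  assumes ix: "index_choice q m ix"
begin

lemma index_choice_length: "length ix = q"
  and index_choice_distinct: "distinct ix"
  and index_choice_less: "\<forall>i\<in>set ix. i < m"
  using ix by (auto simp: index_choice_def strict_sorted_iff)

lemma bits_at_in_bits: "x \<in> bits m \<Longrightarrow> bits_at ix x \<in> bits q"
  using index_choice_length by (simp add: bits_at_def bits_def)

lemma bits_at_set_bits_at: "x \<in> bits m \<Longrightarrow> w \<in> bits q \<Longrightarrow> bits_at ix (set_bits_at x ix w) = w"
  using index_choice_length index_choice_distinct index_choice_less
  by (intro nth_equalityI) (auto simp: bits_at_def bits_def set_bits_at_nth_in)

lemma set_bits_at_bits_at:
  assumes x: "x \<in> bits m" and z: "z \<in> bits m" and agree: "agree_off m ix x z"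
  shows "set_bits_at x ix (bits_at ix z) = z"
proof (rule nth_equalityI)
  show "length (set_bits_at x ix (bits_at ix z)) = length z"
    using x z by (simp add: bits_def)
  fix k assume "k < length (set_bits_at x ix (bits_at ix z))"
  then have k: "k < m"
    using x by (simp add: bits_def)
  show "set_bits_at x ix (bits_at ix z) ! k = z ! k"
  proof (cases "k \<in> set ix")
    case True
    then obtain j where j: "j < length ix" "k = ix ! j"
      by (auto simp: in_set_conv_nth)
    then show ?thesis
      using index_choice_distinct index_choice_less x
      by (simp add: set_bits_at_nth_in bits_at_def bits_def)
  next
    case False
    then show ?thesis
      using agree k by (simp add: set_bits_at_nth_notin agree_off_def)
  qed
qed

lemma bits_at_inj:
  assumes "x \<in> bits m" "z \<in> bits m" "agree_off m ix x z" "bits_at ix x = bits_at ix z"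
  shows "x = z"
  using set_bits_at_bits_at[of x x] set_bits_at_bits_at[of x z] assms
  by (simp add: agree_off_def)

lemma bij_betw_set_bits_at:
  assumes x: "x \<in> bits m"
  shows "bij_betw (set_bits_at x ix) (bits q) {z \<in> bits m. agree_off m ix x z}"
proof (rule bij_betw_byWitness[where f' = "bits_at ix"])
  show "\<forall>w\<in>bits q. bits_at ix (set_bits_at x ix w) = w"
    using bits_at_set_bits_at[OF x] by blast
  show "\<forall>z\<in>{z \<in> bits m. agree_off m ix x z}. set_bits_at x ix (bits_at ix z) = z"
    using set_bits_at_bits_at[OF x] by blast
  show "set_bits_at x ix ` bits q \<subseteq> {z \<in> bits m. agree_off m ix x z}"
    using x by (auto simp: bits_def agree_off_def set_bits_at_nth_notin)
  show "bits_at ix ` {z \<in> bits m. agree_off m ix x z} \<subseteq> bits q"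
    using bits_at_in_bits by blast
qed

lemma sum_agree_off:
  fixes F :: "bool list \<Rightarrow> 'a::comm_monoid_add"
  assumes x: "x \<in> bits m"
  shows "(\<Sum>z\<in>bits m. if agree_off m ix x z then F (bits_at ix z) else 0) = (\<Sum>w\<in>bits q. F w)"
proof -
  have "(\<Sum>z\<in>bits m. if agree_off m ix x z then F (bits_at ix z) else 0)
      = (\<Sum>z\<in>{z\<in>bits m. agree_off m ix x z}. F (bits_at ix z))"
    by (simp add: sum.inter_filter)
  also have "\<dots> = (\<Sum>w\<in>bits q. F (bits_at ix (set_bits_at x ix w)))"
    by (rule sum.reindex_bij_betw[symmetric]) (rule bij_betw_set_bits_at[OF x])
  also have "\<dots> = (\<Sum>w\<in>bits q. F w)"
    by (rule sum.cong) (simp_all add: bits_at_set_bits_at[OF x])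
  finally show ?thesis .
qed

lemma mmul_apply_gate:
  assumes x: "x \<in> bits m"
  shows "mmul m (apply_gate m g ix) (apply_gate m h ix) x y = apply_gate m (mmul q g h) ix x y"
proof (cases "agree_off m ix x y")
  case True
  have "mmul m (apply_gate m g ix) (apply_gate m h ix) x y
      = (\<Sum>z\<in>bits m. if agree_off m ix x z
           then g (bits_at ix x) (bits_at ix z) * h (bits_at ix z) (bits_at ix y) else 0)"
    unfolding mmul_def apply_gate_eq
    by (rule sum.cong) (use True in \<open>auto simp: agree_off_def\<close>)
  also have "\<dots> = mmul q g h (bits_at ix x) (bits_at ix y)"
    using sum_agree_off[OF x, of "\<lambda>w. g (bits_at ix x) w * h w (bits_at ix y)"]
    by (simp add: mmul_def)
  finally show ?thesis
    using True by (simp add: apply_gate_eq)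
next
  case False
  then have "\<not> (agree_off m ix x z \<and> agree_off m ix z y)" for z
    by (auto simp: agree_off_def)
  then have "mmul m (apply_gate m g ix) (apply_gate m h ix) x y = 0"
    unfolding mmul_def apply_gate_eq by (intro sum.neutral) auto
  then show ?thesis
    using False by (simp add: apply_gate_eq)
qed

lemma apply_gate_opeq: "opeq q g h \<Longrightarrow> opeq m (apply_gate m g ix) (apply_gate m h ix)"
  using bits_at_in_bits by (simp add: opeq_def apply_gate_eq)

lemma apply_gate_idop: "opeq m (apply_gate m idop ix) idop"
  using bits_at_inj by (auto simp: opeq_def apply_gate_eq idop_def agree_off_def)

lemma apply_gate_inverse:
  assumes "opeq q (mmul q g h) idop"
  shows "opeq m (mmul m (apply_gate m g ix) (apply_gate m h ix)) idop"
proof -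
  have "opeq m (mmul m (apply_gate m g ix) (apply_gate m h ix)) (apply_gate m (mmul q g h) ix)"
    by (simp add: opeq_def mmul_apply_gate)
  then show ?thesis
    using apply_gate_opeq[OF assms] apply_gate_idop by (blast intro: opeq_trans)
qed

lemma unitary_apply_gate: "unitary_op q g \<Longrightarrow> unitary_op m (apply_gate m g ix)"
  by (simp add: unitary_op_def adjoint_apply_gate apply_gate_inverse)

end

lemma unitary_circuit_op: "q_circuit q m gs \<Longrightarrow> unitary_op m (circuit_op m gs)"
  by (induction gs) (auto simp: q_circuit_def unitary_idop intro!: unitary_mmul unitary_apply_gate)

subsection \<open>The Frobenius norm\<close>

definition frob :: "nat \<Rightarrow> qop \<Rightarrow> real" where
  "frob m A = L2_set (\<lambda>(x, y). cmod (A x y)) (bits m \<times> bits m)"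

lemma frob_eq_sqrt_sum: "frob m A = sqrt (\<Sum>x\<in>bits m. \<Sum>y\<in>bits m. (cmod (A x y))\<^sup>2)"
  unfolding frob_def L2_set_def by (simp add: sum.cartesian_product case_prod_beta)

lemma frob_add_le: "frob m (\<lambda>x y. A x y + B x y) \<le> frob m A + frob m B"
proof -
  have "frob m (\<lambda>x y. A x y + B x y)
      \<le> L2_set (\<lambda>(x, y). cmod (A x y) + cmod (B x y)) (bits m \<times> bits m)"
    unfolding frob_def by (rule L2_set_mono) (auto intro: norm_triangle_ineq)
  also have "\<dots> \<le> frob m A + frob m B"
    unfolding frob_def using L2_set_triangle_ineq by (simp add: case_prod_beta')
  finally show ?thesis .
qed

lemma frob_opeq: "opeq m A B \<Longrightarrow> frob m A = frob m B"
  unfolding frob_eq_sqrt_sum opeq_def by (simp cong: sum.cong)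

lemma norm_le_frob: "x \<in> bits m \<Longrightarrow> y \<in> bits m \<Longrightarrow> cmod (A x y) \<le> frob m A"
  unfolding frob_def
  using member_le_L2_set[of "bits m \<times> bits m" "(x, y)" "\<lambda>(x, y). cmod (A x y)"] by simp

lemma frob_adjoint: "frob m (adjoint A) = frob m A"
  unfolding frob_eq_sqrt_sum adjoint_def by (subst sum.swap) simp

lemma frob_squared_eq_trace:
  "complex_of_real ((frob m A)\<^sup>2) = (\<Sum>y\<in>bits m. mmul m (adjoint A) A y y)"
proof -
  have "(frob m A)\<^sup>2 = (\<Sum>y\<in>bits m. \<Sum>x\<in>bits m. (cmod (A x y))\<^sup>2)"
    unfolding frob_eq_sqrt_sum by (simp add: sum_nonneg) (rule sum.swap)
  moreover have "mmul m (adjoint A) A y y = complex_of_real (\<Sum>x\<in>bits m. (cmod (A x y))\<^sup>2)" for y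
    by (simp add: mmul_def adjoint_def complex_norm_square mult.commute del: of_real_power)
  ultimately show ?thesis
    by simp
qed

lemma frob_eq_if_gram_opeq:
  "opeq m (mmul m (adjoint A) A) (mmul m (adjoint B) B) \<Longrightarrow> frob m A = frob m B"
proof -
  assume "opeq m (mmul m (adjoint A) A) (mmul m (adjoint B) B)"
  then have "complex_of_real ((frob m A)\<^sup>2) = complex_of_real ((frob m B)\<^sup>2)"
    unfolding frob_squared_eq_trace opeq_def by (intro sum.cong) auto
  then have "(frob m A)\<^sup>2 = (frob m B)\<^sup>2"
    by (simp only: of_real_eq_iff)
  then show ?thesis
    by (simp add: frob_def L2_set_nonneg)
qed

lemma frob_mmul_unitary_left: "unitary_op m U \<Longrightarrow> frob m (mmul m U D) = frob m D"
  by (rule frob_eq_if_gram_opeq)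
    (use mmul_cancel_middle[of m "adjoint U" U "adjoint D" D] in
      \<open>simp add: unitary_op_def adjoint_mmul mmul_assoc\<close>)

lemma frob_mmul_unitary_right: "unitary_op m U \<Longrightarrow> frob m (mmul m D U) = frob m D"
  by (metis adjoint_mmul frob_adjoint frob_mmul_unitary_left unitary_adjoint)

lemma frob_apply_gate_le:
  assumes ix: "index_choice q m ix" and "0 \<le> \<epsilon>"
    and h: "\<forall>a\<in>bits q. \<forall>b\<in>bits q. cmod (h a b) \<le> \<epsilon>"
  shows "frob m (apply_gate m h ix) \<le> sqrt (2 ^ m * 2 ^ q) * \<epsilon>"
proof -
  have "(\<Sum>x\<in>bits m. \<Sum>z\<in>bits m. (cmod (apply_gate m h ix x z))\<^sup>2)
      = (\<Sum>x\<in>bits m. \<Sum>z\<in>bits m. if agree_off m ix x z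
           then (cmod (h (bits_at ix x) (bits_at ix z)))\<^sup>2 else 0)"
    by (intro sum.cong refl) (simp add: apply_gate_eq)
  also have "\<dots> = (\<Sum>x\<in>bits m. \<Sum>w\<in>bits q. (cmod (h (bits_at ix x) w))\<^sup>2)"
    by (intro sum.cong refl sum_agree_off[OF ix])
  also have "\<dots> \<le> (\<Sum>x\<in>bits m. \<Sum>w\<in>bits q. \<epsilon>\<^sup>2)"
    using h bits_at_in_bits[OF ix] by (intro sum_mono power_mono) auto
  also have "\<dots> = 2 ^ m * 2 ^ q * \<epsilon>\<^sup>2"
    by (simp add: card_bits)
  finally have "frob m (apply_gate m h ix) \<le> sqrt (2 ^ m * 2 ^ q * \<epsilon>\<^sup>2)"
    unfolding frob_eq_sqrt_sum by (rule real_sqrt_le_mono)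
  also have "\<dots> = sqrt (2 ^ m * 2 ^ q) * \<epsilon>"
    using \<open>0 \<le> \<epsilon>\<close> by (simp add: real_sqrt_mult)
  finally show ?thesis .
qed

subsection \<open>Perturbing the gates of a circuit\<close>

definition close_gates :: "nat \<Rightarrow> real \<Rightarrow> qop \<times> nat list \<Rightarrow> qop \<times> nat list \<Rightarrow> bool" where
  "close_gates q \<epsilon> G H \<longleftrightarrow>
     snd G = snd H \<and> (\<forall>a\<in>bits q. \<forall>b\<in>bits q. cmod (fst G a b - fst H a b) \<le> \<epsilon>)"

lemma mmul_diff:
  "mmul m A P x y - mmul m B Q x y
   = mmul m (\<lambda>x y. A x y - B x y) P x y + mmul m B (\<lambda>x y. P x y - Q x y) x y"
  by (simp add: mmul_def sum_subtractf[symmetric] sum.distrib[symmetric] algebra_simps)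

lemma frob_circuit_diff_le:
  assumes "list_all2 (close_gates q \<epsilon>) gs hs" "q_circuit q m gs" "q_circuit q m hs" "0 \<le> \<epsilon>"
  shows "frob m (\<lambda>x y. circuit_op m gs x y - circuit_op m hs x y)
           \<le> length gs * (sqrt (2 ^ m * 2 ^ q) * \<epsilon>)"
  using assms(1-3)
proof (induction rule: list_all2_induct)
  case Nil
  then show ?case
    by (simp add: frob_eq_sqrt_sum)
next
  case (Cons G gs H hs)
  obtain g ix h where G: "G = (g, ix)" and H: "H = (h, ix)"
    and close: "\<forall>a\<in>bits q. \<forall>b\<in>bits q. cmod (g a b - h a b) \<le> \<epsilon>"
    using Cons.hyps(1) by (cases G, cases H) (auto simp: close_gates_def)
  have gs: "q_circuit q m gs" and hs: "q_circuit q m hs" and ix: "index_choice q m ix"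
    and "unitary_op q h"
    using Cons.prems G H by (auto simp: q_circuit_def)
  then have unitary: "unitary_op m (circuit_op m gs)" "unitary_op m (apply_gate m h ix)"
    by (simp_all add: unitary_circuit_op unitary_apply_gate)
  have "frob m (\<lambda>x y. circuit_op m (G # gs) x y - circuit_op m (H # hs) x y)
      \<le> frob m (mmul m (\<lambda>x y. apply_gate m g ix x y - apply_gate m h ix x y) (circuit_op m gs))
        + frob m (mmul m (apply_gate m h ix) (\<lambda>x y. circuit_op m gs x y - circuit_op m hs x y))"
    using frob_add_le by (simp add: G H mmul_diff)
  also have "\<dots> = frob m (apply_gate m (\<lambda>a b. g a b - h a b) ix)
                 + frob m (\<lambda>x y. circuit_op m gs x y - circuit_op m hs x y)"
    by (simp add: frob_mmul_unitary_left frob_mmul_unitary_right unitary apply_gate_diff)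
  also have "\<dots> \<le> sqrt (2 ^ m * 2 ^ q) * \<epsilon> + length gs * (sqrt (2 ^ m * 2 ^ q) * \<epsilon>)"
    using frob_apply_gate_le[OF ix \<open>0 \<le> \<epsilon>\<close> close] Cons.IH[OF gs hs] by (rule add_mono)
  finally show ?case
    by (simp add: algebra_simps)
qed

subsection \<open>Encoding circuits by quantized gates\<close>

definition quantize :: "nat \<Rightarrow> complex \<Rightarrow> int \<times> int" where
  "quantize D z = (round (Re z * D), round (Im z * D))"

definition gate_code :: "nat \<Rightarrow> nat \<Rightarrow> qop \<Rightarrow> bool list \<times> bool list \<Rightarrow> int \<times> int" where
  "gate_code D q g = restrict (\<lambda>(a, b). quantize D (g a b)) (bits q \<times> bits q)"

definition circuit_code ::
    "nat \<Rightarrow> nat \<Rightarrow> (qop \<times> nat list) list \<Rightarrow> (nat list \<times> (bool list \<times> bool list \<Rightarrow> int \<times> int)) list"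
  where "circuit_code D q gs = map (\<lambda>(g, ix). (ix, gate_code D q g)) gs"

definition code_alphabet ::
    "nat \<Rightarrow> nat \<Rightarrow> nat \<Rightarrow> (nat list \<times> (bool list \<times> bool list \<Rightarrow> int \<times> int)) set"
  where "code_alphabet D q m =
    {ix. index_choice q m ix} \<times> (bits q \<times> bits q \<rightarrow>\<^sub>E {-int D..int D} \<times> {-int D..int D})"

lemma length_circuit_code [simp]: "length (circuit_code D q gs) = length gs"
  by (simp add: circuit_code_def)

lemma round_eq_imp_dist_le: "round (u :: real) = round v \<Longrightarrow> \<bar>u - v\<bar> \<le> 1"
  using of_int_round_abs_le[of u] of_int_round_abs_le[of v] by linarith

lemma round_in_interval: "\<bar>u :: real\<bar> \<le> of_int d \<Longrightarrow> round u \<in> {-d..d}"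
proof -
  assume "\<bar>u\<bar> \<le> of_int d"
  then have "of_int (round u) < of_int d + (1::real)" "of_int (-d) < of_int (round u) + (1::real)"
    using of_int_round_abs_le[of u] by linarith+
  then show ?thesis
    by simp
qed

lemma quantize_eq_imp_dist_le:
  assumes "0 < D" "quantize D z = quantize D w"
  shows "cmod (z - w) \<le> 2 / D"
proof -
  have "\<bar>Re z * D - Re w * D\<bar> \<le> 1" "\<bar>Im z * D - Im w * D\<bar> \<le> 1"
    using assms(2) by (auto simp: quantize_def intro: round_eq_imp_dist_le)
  moreover have "\<bar>Re (z - w)\<bar> * D = \<bar>Re z * D - Re w * D\<bar>"
    "\<bar>Im (z - w)\<bar> * D = \<bar>Im z * D - Im w * D\<bar>"
    by (simp_all add: abs_mult left_diff_distrib[symmetric])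
  ultimately have "\<bar>Re (z - w)\<bar> * D \<le> 1" "\<bar>Im (z - w)\<bar> * D \<le> 1"
    by simp_all
  then have "\<bar>Re (z - w)\<bar> \<le> 1 / D" "\<bar>Im (z - w)\<bar> \<le> 1 / D"
    using assms(1) by (simp_all add: le_divide_eq)
  then show ?thesis
    using cmod_le[of "z - w"] by simp
qed

lemma quantize_in_box:
  assumes "cmod z \<le> 1"
  shows "quantize D z \<in> {-int D..int D} \<times> {-int D..int D}"
proof -
  have "\<bar>Re z\<bar> \<le> 1" "\<bar>Im z\<bar> \<le> 1"
    using assms abs_Re_le_cmod abs_Im_le_cmod by (blast intro: order_trans)+
  then have "\<bar>Re z * D\<bar> \<le> of_int (int D)" "\<bar>Im z * D\<bar> \<le> of_int (int D)"
    by (simp_all add: abs_mult mult_left_le_one_le)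
  then show ?thesis
    using round_in_interval unfolding quantize_def by blast
qed

lemma unitary_entry_norm_le_1:
  assumes "unitary_op q g" "a \<in> bits q" "b \<in> bits q"
  shows "cmod (g a b) \<le> 1"
proof -
  have "(\<Sum>w\<in>bits q. g a w * cnj (g a w)) = idop a a"
    using assms unfolding unitary_op_def opeq_def mmul_def adjoint_def by blast
  then have "complex_of_real (\<Sum>w\<in>bits q. (cmod (g a w))\<^sup>2) = 1"
    by (simp only: of_real_sum complex_norm_square) (simp add: idop_def)
  then have "(\<Sum>w\<in>bits q. (cmod (g a w))\<^sup>2) = 1"
    by (simp only: of_real_eq_1_iff)
  moreover have "(cmod (g a b))\<^sup>2 \<le> (\<Sum>w\<in>bits q. (cmod (g a w))\<^sup>2)"
    using assms(3) by (intro member_le_sum) auto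
  ultimately show ?thesis
    by (simp add: power_le_one_iff abs_le_square_iff)
qed

lemma circuit_code_in_alphabet:
  "q_circuit q m gs \<Longrightarrow> set (circuit_code D q gs) \<subseteq> code_alphabet D q m"
proof
  fix c assume gs: "q_circuit q m gs" and "c \<in> set (circuit_code D q gs)"
  then obtain g ix where "(g, ix) \<in> set gs" and c: "c = (ix, gate_code D q g)"
    by (auto simp: circuit_code_def)
  then have "unitary_op q g" "index_choice q m ix"
    using gs by (auto simp: q_circuit_def)
  then show "c \<in> code_alphabet D q m"
    unfolding c code_alphabet_def gate_code_def restrict_PiE_iff
    by (auto intro!: quantize_in_box unitary_entry_norm_le_1)
qed

lemma index_choices_subset: "{ix. index_choice q m ix} \<subseteq> {ix. set ix \<subseteq> {..<m} \<and> length ix = q}"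
  by (auto simp: index_choice_def)

lemma finite_code_alphabet: "finite (code_alphabet D q m)"
  unfolding code_alphabet_def
  using finite_subset[OF index_choices_subset finite_lists_length_eq]
  by (intro finite_cartesian_product finite_PiE) auto

lemma card_code_alphabet: "card (code_alphabet D q m) \<le> m ^ q * (2 * D + 1) ^ (2 * 4 ^ q)"
proof -
  have "card {ix. index_choice q m ix} \<le> card {ix. set ix \<subseteq> {..<m} \<and> length ix = q}"
    by (rule card_mono[OF finite_lists_length_eq index_choices_subset]) simp
  then have "card {ix. index_choice q m ix} \<le> m ^ q"
    by (simp add: card_lists_length_eq)
  moreover have "card {-int D..int D} = 2 * D + 1"
    by simp
  then have "card (bits q \<times> bits q \<rightarrow>\<^sub>E {-int D..int D} \<times> {-int D..int D})
      = ((2 * D + 1) ^ 2) ^ (2 ^ q * 2 ^ q)"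
    by (simp add: card_PiE card_cartesian_product card_bits power2_eq_square)
  moreover have "((2 * D + 1) ^ 2) ^ (2 ^ q * 2 ^ q) = (2 * D + 1) ^ (2 * 4 ^ q)"
    by (simp add: power_mult[symmetric] power_mult_distrib[symmetric])
  ultimately show ?thesis
    unfolding code_alphabet_def card_cartesian_product by simp
qed

lemma circuit_code_eq_imp_close:
  assumes "0 < D" "circuit_code D q gs = circuit_code D q hs"
  shows "list_all2 (close_gates q (2 / D)) gs hs"
proof -
  have "length gs = length hs"
    using arg_cong[OF assms(2), of length] by simp
  moreover have "close_gates q (2 / D) (gs ! j) (hs ! j)" if "j < length gs" "j < length hs" for j
  proof -
    obtain g ix h ix' where "gs ! j = (g, ix)" "hs ! j = (h, ix')"
      by (cases "gs ! j", cases "hs ! j")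
    moreover have "circuit_code D q gs ! j = circuit_code D q hs ! j"
      using assms(2) by simp
    ultimately have "ix = ix'" "gate_code D q g = gate_code D q h"
      using that by (simp_all add: circuit_code_def)
    have "quantize D (g a b) = quantize D (h a b)" if "a \<in> bits q" "b \<in> bits q" for a b
    proof -
      have "gate_code D q g (a, b) = gate_code D q h (a, b)"
        by (simp add: \<open>gate_code D q g = gate_code D q h\<close>)
      then show ?thesis
        using that by (simp add: gate_code_def)
    qed
    then show ?thesis
      using \<open>gs ! j = (g, ix)\<close> \<open>hs ! j = (h, ix')\<close> \<open>ix = ix'\<close> assms(1)
      by (simp add: close_gates_def quantize_eq_imp_dist_le)
  qed
  ultimately show ?thesis
    by (simp add: list_all2_conv_all_nth)
qed

subsection \<open>Counting\<close>

lemma U_f_entry: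
  "x \<in> bits n \<Longrightarrow> U_f n f (x @ [b]) (x @ [False]) = (if b = f x then 1 else 0)"
  by (simp add: U_f_def bits_def nth_append)

lemma frob_U_f_diff_ge_1:
  assumes "x \<in> bits n" "f x \<noteq> g x"
  shows "1 \<le> frob (n + 1) (\<lambda>r c. U_f n f r c - U_f n g r c)"
proof -
  have "x @ [f x] \<in> bits (n + 1)" "x @ [False] \<in> bits (n + 1)"
    using assms(1) by (simp_all add: bits_def)
  then have "cmod (U_f n f (x @ [f x]) (x @ [False]) - U_f n g (x @ [f x]) (x @ [False]))
      \<le> frob (n + 1) (\<lambda>r c. U_f n f r c - U_f n g r c)"
    by (rule norm_le_frob)
  moreover have "cmod (U_f n f (x @ [f x]) (x @ [False]) - U_f n g (x @ [f x]) (x @ [False])) = 1"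
    using assms by (simp add: U_f_entry)
  ultimately show ?thesis
    by linarith
qed

lemma circuit_code_determines_function:
  fixes n q :: nat
  defines "D \<equiv> 2 ^ (2 * n + q + 2)"
  assumes gs: "q_circuit q (n + 1) gs" "opeq (n + 1) (circuit_op (n + 1) gs) (U_f n f)"
    and hs: "q_circuit q (n + 1) hs" "opeq (n + 1) (circuit_op (n + 1) hs) (U_f n g)"
    and short: "length gs < 2 ^ n" and same_code: "circuit_code D q gs = circuit_code D q hs"
    and x: "x \<in> bits n"
  shows "f x = g x"
proof (rule ccontr)
  assume "f x \<noteq> g x"
  let ?m = "n + 1"
  have D_eq: "D = 2 ^ n * (2 ^ (n + 1 + q) * 2)"
    unfolding D_def by (simp add: power_add[symmetric] algebra_simps)
  then have "0 < D"
    by simp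
  have "(2::real) ^ ?m * 2 ^ q \<le> (2 ^ (n + 1 + q))\<^sup>2"
    using one_le_power[of "2::real" "n + 1 + q"] by (simp add: power2_eq_square power_add)
  then have "sqrt (2 ^ ?m * 2 ^ q) \<le> 2 ^ (n + 1 + q)"
    by (simp add: real_le_lsqrt)
  have "1 \<le> frob ?m (\<lambda>r c. U_f n f r c - U_f n g r c)"
    using x \<open>f x \<noteq> g x\<close> by (rule frob_U_f_diff_ge_1)
  also have "\<dots> = frob ?m (\<lambda>r c. circuit_op ?m gs r c - circuit_op ?m hs r c)"
    using gs(2) hs(2) by (intro frob_opeq) (simp add: opeq_def)
  also have "\<dots> \<le> length gs * (sqrt (2 ^ ?m * 2 ^ q) * (2 / D))"
    using circuit_code_eq_imp_close[OF \<open>0 < D\<close> same_code] gs(1) hs(1)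
    by (rule frob_circuit_diff_le) simp
  also have "\<dots> \<le> length gs * (2 ^ (n + 1 + q) * (2 / D))"
    using \<open>sqrt (2 ^ ?m * 2 ^ q) \<le> 2 ^ (n + 1 + q)\<close> by (intro mult_left_mono mult_right_mono) simp_all
  also have "\<dots> = length gs / 2 ^ n"
    unfolding D_eq by simp
  also have "\<dots> < 1"
    using short by (simp add: divide_less_eq)
  finally show False
    by simp
qed

lemma card_boolean_functions:
  "card {f :: bool list \<Rightarrow> bool. \<forall>x. x \<notin> bits n \<longrightarrow> \<not> f x} = 2 ^ 2 ^ n"
proof -
  have "bij_betw (\<lambda>S x. x \<in> S) (Pow (bits n)) {f. \<forall>x. x \<notin> bits n \<longrightarrow> \<not> f x}"
  proof (rule bij_betw_byWitness[where f' = "\<lambda>f. {x. f x}"])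
    show "\<forall>S\<in>Pow (bits n). {x. x \<in> S} = S"
      by simp
    show "\<forall>f\<in>{f. \<forall>x. x \<notin> bits n \<longrightarrow> \<not> f x}. (\<lambda>x. x \<in> {x. f x}) = f"
      by simp
  qed auto
  then have "card (Pow (bits n)) = card {f :: bool list \<Rightarrow> bool. \<forall>x. x \<notin> bits n \<longrightarrow> \<not> f x}"
    by (rule bij_betw_same_card)
  then show ?thesis
    by (simp add: card_Pow card_bits)
qed

lemma sum_powers_le_Suc_power: "(\<Sum>i\<le>L. a ^ i) \<le> (a + 1 :: nat) ^ L"
proof (induction L)
  case 0
  then show ?case
    by simp
next
  case (Suc L)
  have "(\<Sum>i\<le>Suc L. a ^ i) = 1 + a * (\<Sum>i\<le>L. a ^ i)"
    by (subst sum.atMost_Suc_shift) (simp add: sum_distrib_left)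
  also have "\<dots> \<le> (a + 1) ^ L + a * (a + 1) ^ L"
    using Suc.IH by (intro add_mono mult_left_mono) simp_all
  finally show ?case
    by simp
qed

lemma card_functions_le_codes:
  assumes short: "\<forall>f. \<exists>gs. q_circuit q (n + 1) gs \<and>
                     opeq (n + 1) (circuit_op (n + 1) gs) (U_f n f) \<and> length gs \<le> L"
    and "L < 2 ^ n"
  shows "2 ^ 2 ^ n \<le> (card (code_alphabet (2 ^ (2 * n + q + 2)) q (n + 1)) + 1) ^ L"
proof -
  define D :: nat where "D = 2 ^ (2 * n + q + 2)"
  define Al where "Al = code_alphabet D q (n + 1)"
  define F where "F = {f :: bool list \<Rightarrow> bool. \<forall>x. x \<notin> bits n \<longrightarrow> \<not> f x}"
  obtain circ where circ_spec: "\<forall>f. q_circuit q (n + 1) (circ f) \<and>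
      opeq (n + 1) (circuit_op (n + 1) (circ f)) (U_f n f) \<and> length (circ f) \<le> L"
    using choice[OF short] by blast
  then have circ: "\<And>f. q_circuit q (n + 1) (circ f)"
    "\<And>f. opeq (n + 1) (circuit_op (n + 1) (circ f)) (U_f n f)" "\<And>f. length (circ f) < 2 ^ n"
    using \<open>L < 2 ^ n\<close> by (auto intro: le_less_trans)
  have "inj_on (\<lambda>f. circuit_code D q (circ f)) F"
  proof (rule inj_onI)
    fix f g assume "f \<in> F" "g \<in> F" and "circuit_code D q (circ f) = circuit_code D q (circ g)"
    then have "f x = g x" if "x \<in> bits n" for x
      using circuit_code_determines_function[OF circ(1,2)[of f] circ(1,2)[of g] circ(3)[of f]] that
      unfolding D_def by simp
    then show "f = g"
      using \<open>f \<in> F\<close> \<open>g \<in> F\<close> by (auto simp: F_def)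
  qed
  moreover have "(\<lambda>f. circuit_code D q (circ f)) ` F \<subseteq> {xs. set xs \<subseteq> Al \<and> length xs \<le> L}"
    using circuit_code_in_alphabet[OF circ(1)] circ_spec by (auto simp: Al_def)
  ultimately have "card F \<le> card {xs. set xs \<subseteq> Al \<and> length xs \<le> L}"
    using finite_lists_length_le[OF finite_code_alphabet] by (intro card_inj_on_le) (auto simp: Al_def)
  also have "\<dots> \<le> (card Al + 1) ^ L"
    using sum_powers_le_Suc_power by (simp add: card_lists_length_le Al_def finite_code_alphabet)
  finally show ?thesis
    by (simp add: F_def card_boolean_functions Al_def D_def)
qed

definition code_alphabet_exponent :: "nat \<Rightarrow> nat" where
  "code_alphabet_exponent q = 1 + q + 2 * 4 ^ q * (q + 6)"

lemma code_alphabet_exponent_pos: "0 < code_alphabet_exponent q"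
  by (simp add: code_alphabet_exponent_def)

lemma card_code_alphabet_le_power:
  assumes "0 < n"
  shows "card (code_alphabet (2 ^ (2 * n + q + 2)) q (n + 1)) + 1
           \<le> 2 ^ (n * code_alphabet_exponent q)"
proof -
  define K :: nat where "K = 2 * 4 ^ q"
  have "(n + 1) ^ q \<le> (2 ^ n) ^ q"
    using Suc_leI[OF less_exp[of n]] by (simp add: power_mono)
  moreover have "2 * 2 ^ (2 * n + q + 2) + 1 \<le> (2 :: nat) ^ (2 * n + q + 4)"
    using one_le_power[of "2::nat" "2 * n + q"] by (simp add: power_add)
  then have "(2 * 2 ^ (2 * n + q + 2) + 1) ^ K \<le> ((2 :: nat) ^ (2 * n + q + 4)) ^ K"
    by (rule power_mono) simp
  ultimately have "card (code_alphabet (2 ^ (2 * n + q + 2)) q (n + 1))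
      \<le> 2 ^ (n * q + (2 * n + q + 4) * K)"
    using card_code_alphabet[of "2 ^ (2 * n + q + 2)" q "n + 1"]
    by (simp add: K_def power_add power_mult mult_mono le_trans)
  then have "card (code_alphabet (2 ^ (2 * n + q + 2)) q (n + 1)) + 1
      \<le> 2 * 2 ^ (n * q + (2 * n + q + 4) * K)"
    using one_le_power[of "2::nat" "n * q + (2 * n + q + 4) * K"] by linarith
  also have "\<dots> = 2 ^ (1 + n * q + (2 * n + q + 4) * K)"
    by simp
  also have "\<dots> \<le> 2 ^ (n * code_alphabet_exponent q)"
  proof (rule power_increasing)
    have "q \<le> n * q" "n * (q + 6) = n * q + 6 * n"
      using assms by (simp_all add: algebra_simps)
    then have "2 * n + q + 4 \<le> n * (q + 6)"
      using assms by linarith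
    then have "(2 * n + q + 4) * K \<le> n * (q + 6) * K"
      by simp
    then show "1 + n * q + (2 * n + q + 4) * K \<le> n * code_alphabet_exponent q"
      using assms by (simp add: code_alphabet_exponent_def K_def algebra_simps)
  qed simp
  finally show ?thesis .
qed

lemma exists_function_without_short_circuit:
  assumes "0 < n"
  shows "\<exists>f. \<forall>gs. q_circuit q (n + 1) gs \<and> opeq (n + 1) (circuit_op (n + 1) gs) (U_f n f)
                 \<longrightarrow> 2 ^ n \<le> length gs * (n * code_alphabet_exponent q)"
proof (rule ccontr)
  define k where "k = n * code_alphabet_exponent q"
  define L where "L = (2 ^ n - 1) div k"
  have "0 < k"
    using assms code_alphabet_exponent_pos by (simp add: k_def)
  have short_le_L: "length gs \<le> L" if "length gs * k < 2 ^ n" for gs :: "(qop \<times> nat list) list"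
  proof -
    have "length gs * k \<le> 2 ^ n - 1"
      using that by simp
    then show ?thesis
      by (simp add: L_def less_eq_div_iff_mult_less_eq[OF \<open>0 < k\<close>])
  qed
  assume "\<not> ?thesis"
  then have "\<forall>f. \<exists>gs. q_circuit q (n + 1) gs \<and> opeq (n + 1) (circuit_op (n + 1) gs) (U_f n f)
                   \<and> length gs * k < 2 ^ n"
    by (auto simp: k_def not_le)
  then have "\<forall>f. \<exists>gs. q_circuit q (n + 1) gs \<and> opeq (n + 1) (circuit_op (n + 1) gs) (U_f n f)
                   \<and> length gs \<le> L"
    using short_le_L by blast
  moreover have "L * k < 2 ^ n"
    unfolding L_def
    by (metis diff_less div_times_less_eq_dividend le_less_trans zero_less_one zero_less_power pos2)
  moreover have "L \<le> L * k"
    using \<open>0 < k\<close> by simp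
  with \<open>L * k < 2 ^ n\<close> have "L < 2 ^ n"
    by linarith
  ultimately have "2 ^ 2 ^ n \<le> (card (code_alphabet (2 ^ (2 * n + q + 2)) q (n + 1)) + 1) ^ L"
    by (intro card_functions_le_codes) auto
  also have "\<dots> \<le> (2 ^ k) ^ L"
    using card_code_alphabet_le_power[OF assms] by (simp add: k_def power_mono)
  also have "\<dots> < 2 ^ 2 ^ n"
    using \<open>L * k < 2 ^ n\<close> by (simp add: power_mult[symmetric] mult.commute)
  finally show False
    by simp
qed

lemma ereal_le_qcc:
  assumes "\<And>gs. q_circuit q m gs \<Longrightarrow> opeq m (circuit_op m gs) U \<Longrightarrow> c \<le> real (length gs)"
  shows "ereal c \<le> ereal_of_enat (qcc q m U)"
proof (cases "qcc q m U")
  case (enat r)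
  have "enat (nat \<lceil>c\<rceil>) \<le> qcc q m U"
    unfolding qcc_def using assms by (intro INF_greatest) (simp add: ceiling_le_iff nat_le_iff)
  then have "c \<le> r"
    using enat by simp
  then show ?thesis
    using enat by simp
qed simp

lemma exists_function_with_large_stringent_qcc:
  assumes "0 < n"
  shows "\<exists>f. ereal (2 ^ n / (real (code_alphabet_exponent q) * real n))
              \<le> ereal_of_enat (stringent_qcc q n f)"
proof -
  obtain f where f: "\<And>gs. q_circuit q (n + 1) gs \<Longrightarrow> opeq (n + 1) (circuit_op (n + 1) gs) (U_f n f)
                        \<Longrightarrow> 2 ^ n \<le> length gs * (n * code_alphabet_exponent q)"
    using exists_function_without_short_circuit[OF assms] by blast
  have "2 ^ n / (real (code_alphabet_exponent q) * real n) \<le> real (length gs)"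
    if "q_circuit q (n + 1) gs" "opeq (n + 1) (circuit_op (n + 1) gs) (U_f n f)" for gs
  proof -
    have "real (2 ^ n) \<le> real (length gs * (n * code_alphabet_exponent q))"
      using f[OF that] by (simp only: of_nat_le_iff)
    then show ?thesis
      using assms code_alphabet_exponent_pos[of q] by (simp add: divide_le_eq mult.commute)
  qed
  then show ?thesis
    unfolding stringent_qcc_def by (blast intro: ereal_le_qcc)
qed

theorem mainTheorem12:
  shows "\<forall>q::nat. q \<ge> 1 \<longrightarrow> (\<exists>C::real. C > 0 \<and>
           (\<forall>n::nat. n > 0 \<longrightarrow> (\<exists>f :: bool list \<Rightarrow> bool.
              ereal (C * 2 ^ n / real n) \<le> ereal_of_enat (stringent_qcc q n f))))"
proof (intro allI impI)
  \<comment> \<open>The bound does not need q \<ge> 1.\<close>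
  fix q :: nat
  define E where "E = real (code_alphabet_exponent q)"
  have "0 < E"
    using code_alphabet_exponent_pos by (simp add: E_def)
  then show "\<exists>C::real. C > 0 \<and> (\<forall>n::nat. n > 0 \<longrightarrow> (\<exists>f :: bool list \<Rightarrow> bool.
              ereal (C * 2 ^ n / real n) \<le> ereal_of_enat (stringent_qcc q n f)))"
    using exists_function_with_large_stringent_qcc[of _ q, folded E_def]
    by (intro exI[of _ "1 / E"]) simp
qed

end
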